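(* Let $D,W,N_0,\zeta,P_A,h,g,P^{max}>0$, $\gamma=\frac{g\zeta P_A h}{WN_0}$, $\alpha=\mathbb{L}_0\!\left(\frac{\gamma-1}{e}\right)+1$ with $\mathbb{L}_0$ the principal Lambert W function, and $$\dot\tau_S=\frac{D\ln 2}{W\alpha},\quad \dot\tau_0=\frac{D\ln 2}{W\alpha\gamma}\left(2^{\alpha/\ln 2}-1\right),\quad \ddot\tau_S=\frac{D}{W\log_2\left(1+\frac{P^{max}g}{WN_0}\right)},\quad \ddot\tau_0=\frac{P^{max}\ddot\tau_S}{\zeta P_A h}.$$ Consider the problem: minimize $\tau_0+\tau_S$ over $\tau_0,\tau_S,P\ge0$ subject to $P\tau_S\le\zeta P_A h\tau_0$, $\tau_S W\log_2\left(1+\frac{Pg}{WN_0}\right)\ge D$, and $P\le P^{max}$. If $\zeta P_A h\dot\tau_0/\dot\tau_S\le P^{max}$, then $(\tau_0,\tau_S,P)=(\dot\tau_0,\dot\tau_S,\zeta P_A h\dot\tau_0/\dot\tau_S)$ is optimal. Otherwise $(\tau_0,\tau_S,P)=(\ddot\tau_0,\ddot\tau_S,P^{max})$ is optimal.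
   Context: Single source wireless powered network: the source harvests energy $\zeta P_A h\tau_0$ during time $\tau_0$, then transmits $D$ bits with power $P\le P^{max}$ during time $\tau_S$ over an AWGN channel with gain $g$, bandwidth $W$ and noise spectral density $N_0$. *)

theory Defs
  imports Complex_Main
begin

text \<open>Principal branch of the Lambert W function: for x \<ge> -1/e, the unique
  w \<ge> -1 with w * exp w = x.\<close>
definition lambertW0 :: "real \<Rightarrow> real" where
  "lambertW0 x = (THE w. w \<ge> -1 \<and> w * exp w = x)"

definition feasible ::
  "real \<Rightarrow> real \<Rightarrow> real \<Rightarrow> real \<Rightarrow> real \<Rightarrow> real \<Rightarrow> real \<Rightarrow> real \<Rightarrow> real \<times> real \<times> real \<Rightarrow> bool" where
  "feasible D W N0 \<zeta> PA h g Pmax = (\<lambda>(\<tau>0, \<tau>S, P).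
     \<tau>0 \<ge> 0 \<and> \<tau>S \<ge> 0 \<and> P \<ge> 0 \<and>
     P * \<tau>S \<le> \<zeta> * PA * h * \<tau>0 \<and>
     \<tau>S * W * log 2 (1 + P * g / (W * N0)) \<ge> D \<and>
     P \<le> Pmax)"

definition optimal ::
  "real \<Rightarrow> real \<Rightarrow> real \<Rightarrow> real \<Rightarrow> real \<Rightarrow> real \<Rightarrow> real \<Rightarrow> real \<Rightarrow> real \<times> real \<times> real \<Rightarrow> bool" where
  "optimal D W N0 \<zeta> PA h g Pmax x \<longleftrightarrow>
     feasible D W N0 \<zeta> PA h g Pmax x \<and>
     (\<forall>y. feasible D W N0 \<zeta> PA h g Pmax y \<longrightarrow>
        fst x + fst (snd x) \<le> fst y + fst (snd y))"

end

theory Submission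
  imports Defs
begin

text \<open>In terms of the spectral efficiency x = ln (1 + P g / (W N0)) in nats, a feasible point
  needs \<tau>S \<ge> D ln 2 / (W x) and \<tau>0 \<ge> P \<tau>S / (\<zeta> PA h), so its total time is at least
  D ln 2 / (W \<gamma>) \<cdot> (\<gamma> - 1 + exp x) / x, with equality for the schedule built from x.
  Over x > 0 this factor is minimal at the stationary point \<alpha>, (\<alpha> - 1) exp \<alpha> = \<gamma> - 1,
  which is exactly what the Lambert W expression solves, and it is decreasing on (0, \<alpha>].
  So if the power cap forces x \<le> ln (1 + Pmax g / (W N0)) < \<alpha>, the optimum sits at the cap.
  Both comparisons follow from the tangent line of exp.\<close>

lemma strict_mono_on_xexp: "strict_mono_on {-1..} (\<lambda>w::real. w * exp w)"
proof (rule strict_mono_onI)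
  fix u v :: real
  assume "u \<in> {-1..}" "u < v"
  then show "u * exp u < v * exp v"
  proof (intro DERIV_pos_imp_increasing_open[OF \<open>u < v\<close>])
    fix x assume "u < x" "u \<in> {-1..}"
    then have "0 < (1 + x) * exp x" by simp
    moreover have "DERIV (\<lambda>t. t * exp t) x :> (1 + x) * exp x"
      by (auto intro!: derivative_eq_intros simp: algebra_simps)
    ultimately show "\<exists>y. DERIV (\<lambda>t. t * exp t) x :> y \<and> y > 0" by blast
  qed (intro continuous_intros)
qed

lemma lambertW0:
  fixes y :: real
  assumes "-1 / exp 1 \<le> y"
  shows "-1 \<le> lambertW0 y" and "lambertW0 y * exp (lambertW0 y) = y"
proof -
  have "\<exists>w. -1 \<le> w \<and> w \<le> \<bar>y\<bar> + 1 \<and> w * exp w = y"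
  proof (rule IVT')
    show "(-1) * exp (-1) \<le> y" using assms by (simp add: exp_minus field_simps)
    have "y \<le> \<bar>y\<bar> + 1" by simp
    also have "\<dots> \<le> (\<bar>y\<bar> + 1) * exp (\<bar>y\<bar> + 1)"
      using exp_ge_add_one_self[of "\<bar>y\<bar> + 1"] by (intro mult_le_cancel_left1[THEN iffD2]) auto
    finally show "y \<le> (\<bar>y\<bar> + 1) * exp (\<bar>y\<bar> + 1)" .
    show "continuous_on {-1..\<bar>y\<bar> + 1} (\<lambda>w. w * exp w)" by (intro continuous_intros)
  qed simp
  then obtain w where w: "-1 \<le> w" "w * exp w = y" by blast
  have "v = w" if "-1 \<le> v" "v * exp v = y" for v
    using strict_mono_on_imp_inj_on[OF strict_mono_on_xexp] that w by (auto dest: inj_onD)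
  with w have "\<exists>!w. -1 \<le> w \<and> w * exp w = y" by blast
  from theI'[OF this] show "-1 \<le> lambertW0 y" "lambertW0 y * exp (lambertW0 y) = y"
    unfolding lambertW0_def by blast+
qed

lemma lambertW0_stationary_point:
  fixes \<gamma> :: real
  assumes "\<gamma> > 0"
  defines "\<alpha> \<equiv> lambertW0 ((\<gamma> - 1) / exp 1) + 1"
  shows "\<alpha> > 0" and "(\<alpha> - 1) * exp \<alpha> = \<gamma> - 1"
proof -
  have "-1 / exp 1 \<le> (\<gamma> - 1) / exp 1" using assms by (intro divide_right_mono) auto
  note W = lambertW0[OF this]
  have "(\<alpha> - 1) * exp \<alpha> = lambertW0 ((\<gamma> - 1) / exp 1) * exp (lambertW0 ((\<gamma> - 1) / exp 1)) * exp 1"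
    unfolding \<alpha>_def by (simp add: exp_add)
  then show stationary: "(\<alpha> - 1) * exp \<alpha> = \<gamma> - 1" using W(2) by simp
  have "\<alpha> \<ge> 0" using W(1) unfolding \<alpha>_def by simp
  moreover have "\<alpha> \<noteq> 0" using stationary \<open>\<gamma> > 0\<close> by auto
  ultimately show "\<alpha> > 0" by simp
qed

lemma exp_ge_tangent: "exp a * (1 + x - a) \<le> exp (x::real)"
proof -
  have "exp a * (1 + (x - a)) \<le> exp a * exp (x - a)"
    by (intro mult_left_mono) auto
  then show ?thesis by (simp add: exp_diff algebra_simps)
qed

lemma mono_on_xexp_minus_exp: "mono_on {0..} (\<lambda>x::real. (x - 1) * exp x)"
proof (rule mono_onI)
  fix m u :: real
  assume "m \<in> {0..}" "u \<in> {0..}" "m \<le> u"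
  then show "(m - 1) * exp m \<le> (u - 1) * exp u"
  proof (intro DERIV_nonneg_imp_nondecreasing[OF \<open>m \<le> u\<close>])
    fix x assume "m \<le> x" "m \<in> {0..}"
    then have "0 \<le> x * exp x" by simp
    moreover have "DERIV (\<lambda>t. (t - 1) * exp t) x :> x * exp x"
      by (auto intro!: derivative_eq_intros simp: algebra_simps)
    ultimately show "\<exists>y. DERIV (\<lambda>t. (t - 1) * exp t) x :> y \<and> y \<ge> 0" by blast
  qed
qed

definition time_factor :: "real \<Rightarrow> real \<Rightarrow> real" where
  "time_factor \<gamma> x = (\<gamma> - 1 + exp x) / x"

lemma time_factor_stationary_le:
  assumes "x > 0" "\<alpha> > 0" "(\<alpha> - 1) * exp \<alpha> = \<gamma> - 1"
  shows "time_factor \<gamma> \<alpha> \<le> time_factor \<gamma> x"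
proof -
  have "time_factor \<gamma> \<alpha> = exp \<alpha>"
    using assms by (simp add: time_factor_def field_simps)
  moreover have "exp \<alpha> * x \<le> \<gamma> - 1 + exp x"
    using exp_ge_tangent[of \<alpha> x] assms(3) by (simp add: algebra_simps)
  ultimately show ?thesis
    using assms by (simp add: time_factor_def pos_le_divide_eq)
qed

lemma time_factor_antimono:
  assumes "x > 0" "x \<le> m" "(m - 1) * exp m \<le> \<gamma> - 1"
  shows "time_factor \<gamma> m \<le> time_factor \<gamma> x"
proof -
  have "m > 0" using assms by simp
  have "m * (exp m * (1 + x - m)) \<le> m * exp x"
    using exp_ge_tangent[of m x] \<open>m > 0\<close> by (intro mult_left_mono) auto
  moreover have "0 \<le> (m - x) * (\<gamma> - 1 - (m - 1) * exp m)"
    using assms by (intro mult_nonneg_nonneg) auto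
  ultimately have "x * (\<gamma> - 1 + exp m) \<le> m * (\<gamma> - 1 + exp x)"
    by (simp add: algebra_simps)
  then show ?thesis
    using assms \<open>m > 0\<close> by (simp add: time_factor_def divide_simps mult.commute)
qed

locale wireless_powered_link =
  fixes D W N0 \<zeta> PA h g Pmax :: real
  assumes pos: "D > 0" "W > 0" "N0 > 0" "\<zeta> > 0" "PA > 0" "h > 0" "g > 0" "Pmax > 0"
begin

definition harvested_power :: real where
  "harvested_power = \<zeta> * PA * h"

definition snr_gain :: real where
  "snr_gain = g / (W * N0)"

definition harvested_snr :: real where
  "harvested_snr = snr_gain * harvested_power"

definition time_scale :: real where
  "time_scale = D * ln 2 / (W * harvested_snr)"

text \<open>The power achieving spectral efficiency x, with the rate and energy constraints tight.\<close>
definition schedule :: "real \<Rightarrow> real \<times> real \<times> real" where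
  "schedule x =
     (let P = (exp x - 1) / snr_gain; \<tau>S = D * ln 2 / (W * x) in (P * \<tau>S / harvested_power, \<tau>S, P))"

definition capped_efficiency :: real where
  "capped_efficiency = ln (1 + snr_gain * Pmax)"

abbreviation total_time :: "real \<times> real \<times> real \<Rightarrow> real" where
  "total_time y \<equiv> fst y + fst (snd y)"

lemma harvested_power_pos: "harvested_power > 0"
  and snr_gain_pos: "snr_gain > 0"
  and harvested_snr_pos: "harvested_snr > 0"
  using pos by (simp_all add: harvested_power_def snr_gain_def harvested_snr_def)

lemma feasible_iff:
  "feasible D W N0 \<zeta> PA h g Pmax (\<tau>0, \<tau>S, P) \<longleftrightarrow>
     \<tau>0 \<ge> 0 \<and> \<tau>S \<ge> 0 \<and> P \<ge> 0 \<and> P * \<tau>S \<le> harvested_power * \<tau>0 \<and>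
     D \<le> \<tau>S * W * (ln (1 + snr_gain * P) / ln 2) \<and> P \<le> Pmax"
  by (auto simp: feasible_def harvested_power_def snr_gain_def log_def ac_simps)

lemma total_time_lower_bound:
  assumes "feasible D W N0 \<zeta> PA h g Pmax (\<tau>0, \<tau>S, P)"
  defines "x \<equiv> ln (1 + snr_gain * P)"
  shows "x > 0" and "time_scale * time_factor harvested_snr x \<le> \<tau>0 + \<tau>S"
proof -
  note feas = assms(1)[unfolded feasible_iff]
  have ln2: "ln (2::real) > 0" by simp
  have "1 + snr_gain * P > 0" using feas snr_gain_pos by (simp add: add_pos_nonneg)
  then have exp_x: "exp x = 1 + snr_gain * P" unfolding x_def by simp
  have rate: "D * ln 2 \<le> \<tau>S * W * x"
    using feas ln2 unfolding x_def by (simp add: pos_le_divide_eq)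
  then have "0 < (\<tau>S * W) * x" using pos(1) ln2 by (smt (verit) mult_pos_pos)
  moreover have "0 \<le> \<tau>S * W" using feas pos(2) by simp
  ultimately show "x > 0" by (metis mult_nonneg_nonpos not_less)
  then have \<tau>S: "D * ln 2 / (W * x) \<le> \<tau>S"
    using rate pos(2) by (simp add: pos_divide_le_eq algebra_simps)
  have "\<tau>S * (1 + P / harvested_power) \<le> \<tau>0 + \<tau>S"
    using feas harvested_power_pos by (simp add: pos_divide_le_eq algebra_simps)
  moreover have "1 + P / harvested_power = (harvested_snr - 1 + exp x) / harvested_snr"
    using exp_x harvested_power_pos snr_gain_pos by (simp add: harvested_snr_def field_simps)
  moreover have "0 \<le> (harvested_snr - 1 + exp x) / harvested_snr"
    using exp_x feas harvested_power_pos snr_gain_pos by (simp add: harvested_snr_def)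
  ultimately have
    "D * ln 2 / (W * x) * ((harvested_snr - 1 + exp x) / harvested_snr) \<le> \<tau>0 + \<tau>S"
    using \<tau>S by (smt (verit) mult_right_mono)
  then show "time_scale * time_factor harvested_snr x \<le> \<tau>0 + \<tau>S"
    by (simp add: time_scale_def time_factor_def field_simps)
qed

lemma schedule_feasible:
  assumes "x > 0" "(exp x - 1) / snr_gain \<le> Pmax"
  shows "feasible D W N0 \<zeta> PA h g Pmax (schedule x)"
proof -
  have "1 + snr_gain * ((exp x - 1) / snr_gain) = exp x" using snr_gain_pos by simp
  then show ?thesis
    using assms pos harvested_power_pos snr_gain_pos
    by (simp add: schedule_def feasible_iff Let_def)
qed

lemma total_time_schedule:
  "x \<noteq> 0 \<Longrightarrow> total_time (schedule x) = time_scale * time_factor harvested_snr x"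
  using pos harvested_power_pos snr_gain_pos
  by (simp add: schedule_def time_scale_def time_factor_def harvested_snr_def Let_def field_simps)

lemma schedule_optimal:
  assumes "x > 0" "(exp x - 1) / snr_gain \<le> Pmax"
    and minimal: "\<And>y. 0 < y \<Longrightarrow> y \<le> capped_efficiency \<Longrightarrow>
      time_factor harvested_snr x \<le> time_factor harvested_snr y"
  shows "optimal D W N0 \<zeta> PA h g Pmax (schedule x)"
  unfolding optimal_def
proof (intro conjI allI impI)
  show "feasible D W N0 \<zeta> PA h g Pmax (schedule x)" using assms(1,2) by (rule schedule_feasible)
  fix y assume feas: "feasible D W N0 \<zeta> PA h g Pmax y"
  obtain \<tau>0 \<tau>S P where y: "y = (\<tau>0, \<tau>S, P)" by (cases y) auto
  note bound = total_time_lower_bound[OF feas[unfolded y]]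
  have "0 \<le> P" "P \<le> Pmax" using feas unfolding y feasible_iff by auto
  then have "ln (1 + snr_gain * P) \<le> capped_efficiency"
    using snr_gain_pos by (simp add: capped_efficiency_def add_pos_nonneg mult_left_mono)
  then have "time_factor harvested_snr x \<le> time_factor harvested_snr (ln (1 + snr_gain * P))"
    using minimal bound(1) by blast
  then have "time_scale * time_factor harvested_snr x
      \<le> time_scale * time_factor harvested_snr (ln (1 + snr_gain * P))"
    using pos harvested_snr_pos by (intro mult_left_mono) (auto simp: time_scale_def)
  then show "total_time (schedule x) \<le> total_time y"
    using bound(2) total_time_schedule \<open>x > 0\<close> y by simp
qed


lemma exp_capped_efficiency: "exp capped_efficiency = 1 + snr_gain * Pmax"
  using snr_gain_pos pos(8) by (simp add: capped_efficiency_def add_pos_nonneg)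

lemma capped_efficiency_pos: "capped_efficiency > 0"
proof -
  have "exp capped_efficiency > 1" using exp_capped_efficiency snr_gain_pos pos(8) by simp
  then show ?thesis by simp
qed

lemma capped_efficiency_less_iff: "capped_efficiency < x \<longleftrightarrow> Pmax < (exp x - 1) / snr_gain"
proof -
  have "capped_efficiency < x \<longleftrightarrow> exp capped_efficiency < exp x" by simp
  also have "\<dots> \<longleftrightarrow> Pmax < (exp x - 1) / snr_gain"
    using snr_gain_pos by (auto simp: exp_capped_efficiency pos_less_divide_eq mult.commute)
  finally show ?thesis .
qed

lemma schedule_capped_efficiency:
  defines "\<tau>S \<equiv> D / (W * log 2 (1 + Pmax * g / (W * N0)))"
  shows "schedule capped_efficiency = (Pmax * \<tau>S / (\<zeta> * PA * h), \<tau>S, Pmax)"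
proof -
  have "(exp capped_efficiency - 1) / snr_gain = Pmax"
    using snr_gain_pos by (simp add: exp_capped_efficiency)
  moreover have "D * ln 2 / (W * capped_efficiency) = \<tau>S"
    by (simp add: \<tau>S_def capped_efficiency_def log_def snr_gain_def ac_simps)
  ultimately show ?thesis by (simp add: schedule_def harvested_power_def Let_def)
qed

lemma schedule_stationary_optimal:
  assumes "\<alpha> > 0" "(\<alpha> - 1) * exp \<alpha> = harvested_snr - 1" "(exp \<alpha> - 1) / snr_gain \<le> Pmax"
  shows "optimal D W N0 \<zeta> PA h g Pmax (schedule \<alpha>)"
  using assms by (intro schedule_optimal time_factor_stationary_le)

lemma schedule_capped_efficiency_optimal:
  assumes "\<alpha> > 0" "(\<alpha> - 1) * exp \<alpha> = harvested_snr - 1" "Pmax < (exp \<alpha> - 1) / snr_gain"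
  shows "optimal D W N0 \<zeta> PA h g Pmax (schedule capped_efficiency)"
proof (rule schedule_optimal)
  have "capped_efficiency < \<alpha>" using assms(3) by (simp add: capped_efficiency_less_iff)
  then have below: "(capped_efficiency - 1) * exp capped_efficiency \<le> harvested_snr - 1"
    using mono_onD[OF mono_on_xexp_minus_exp, of capped_efficiency \<alpha>] capped_efficiency_pos assms(2)
    by simp
  show "time_factor harvested_snr capped_efficiency \<le> time_factor harvested_snr y"
    if "0 < y" "y \<le> capped_efficiency" for y
    using that below by (rule time_factor_antimono)
  show "(exp capped_efficiency - 1) / snr_gain \<le> Pmax"
    using snr_gain_pos by (simp add: exp_capped_efficiency)
qed (rule capped_efficiency_pos)

end

theorem theorem2:
  fixes D W N0 \<zeta> PA h g Pmax :: real
  assumes "D > 0" "W > 0" "N0 > 0" "\<zeta> > 0" "PA > 0" "h > 0" "g > 0" "Pmax > 0"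
  defines "\<gamma> \<equiv> g * \<zeta> * PA * h / (W * N0)"
  defines "\<alpha> \<equiv> lambertW0 ((\<gamma> - 1) / exp 1) + 1"
  defines "\<tau>S1 \<equiv> D * ln 2 / (W * \<alpha>)"
  defines "\<tau>01 \<equiv> D * ln 2 / (W * \<alpha> * \<gamma>) * (2 powr (\<alpha> / ln 2) - 1)"
  defines "\<tau>S2 \<equiv> D / (W * log 2 (1 + Pmax * g / (W * N0)))"
  defines "\<tau>02 \<equiv> Pmax * \<tau>S2 / (\<zeta> * PA * h)"
  shows "(\<zeta> * PA * h * \<tau>01 / \<tau>S1 \<le> Pmax \<longrightarrow>
            optimal D W N0 \<zeta> PA h g Pmax (\<tau>01, \<tau>S1, \<zeta> * PA * h * \<tau>01 / \<tau>S1)) \<and>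
         (\<not> (\<zeta> * PA * h * \<tau>01 / \<tau>S1 \<le> Pmax) \<longrightarrow>
            optimal D W N0 \<zeta> PA h g Pmax (\<tau>02, \<tau>S2, Pmax))"
proof -
  interpret wireless_powered_link D W N0 \<zeta> PA h g Pmax using assms(1-8) by unfold_locales
  have \<gamma>: "\<gamma> = harvested_snr"
    by (simp add: \<gamma>_def harvested_snr_def snr_gain_def harvested_power_def)
  note \<alpha> = lambertW0_stationary_point[of \<gamma>, folded \<alpha>_def, OF harvested_snr_pos[folded \<gamma>]]
  have "2 powr (\<alpha> / ln 2) = exp \<alpha>" by (simp add: powr_def)
  then have P1: "\<zeta> * PA * h * \<tau>01 / \<tau>S1 = (exp \<alpha> - 1) / snr_gain"
    using assms(1-8) \<alpha>(1) by (simp add: \<tau>01_def \<tau>S1_def \<gamma>_def snr_gain_def field_simps)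
  have "\<tau>S1 > 0" using assms(1,2) \<alpha>(1) by (simp add: \<tau>S1_def)
  then have "schedule \<alpha> = (\<tau>01, \<tau>S1, \<zeta> * PA * h * \<tau>01 / \<tau>S1)"
    using assms(4-6)
    by (simp add: schedule_def P1[symmetric] \<tau>S1_def[symmetric] harvested_power_def Let_def)
  moreover have "schedule capped_efficiency = (\<tau>02, \<tau>S2, Pmax)"
    unfolding schedule_capped_efficiency \<tau>02_def \<tau>S2_def ..
  ultimately show ?thesis
    using schedule_stationary_optimal schedule_capped_efficiency_optimal \<alpha>
    unfolding P1 \<gamma> not_le by metis
qed

end
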